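(* Let $f:\mathbb{R}^n\to\mathbb{R}$ be a continuously differentiable convex function. Let $H$ be a diagonal matrix with nonnegative diagonal entries such that $f(y)\le f(x)+\nabla f(x)^T(y-x)+\tfrac12\|y-x\|_H^2$ for all $x,y\in\mathbb{R}^n$, and let $D$ be a diagonal matrix with $D\succ H$. Let $(x_k)$ be a sequence generated by the IWHT method with $D$, and assume $(x_k)$ has a limit point $\bar x$. Then the entire sequence $(x_k)$ converges to $\bar x$.
   Context: $\|z\|_A^2=z^TAz$. $C_s=\{x\in\mathbb{R}^n:\|x\|_0\le s\}$ for a positive integer $s$, where $\|x\|_0$ is the number of nonzero entries. $\mathcal{P}_{C_s}(z)=\operatorname{argmin}_{y\in C_s}\|y-z\|_2^2$ (set-valued). IWHT with diagonal $D\succ0$: start from $x_0\in C_s$; for $k\ge0$ pick $y_{k+1}\in\mathcal{P}_{C_s}\big(D^{1/2}x_k-D^{-1/2}\nabla f(x_k)\big)$ and set $x_{k+1}=D^{-1/2}y_{k+1}$. *)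

theory Defs
  imports "HOL-Analysis.Analysis"
begin

definition is_diag :: "real^'n^'n \<Rightarrow> bool" where
  "is_diag A \<longleftrightarrow> (\<forall>i j. i \<noteq> j \<longrightarrow> A$i$j = 0)"

definition qnorm2 :: "real^'n^'n \<Rightarrow> real^'n \<Rightarrow> real" where
  "qnorm2 A z = z \<bullet> (A *v z)"

text \<open>Positive definiteness (Loewner order A \<succ> B means A - B positive definite).\<close>
definition pos_def :: "real^'n^'n \<Rightarrow> bool" where
  "pos_def A \<longleftrightarrow> (\<forall>z. z \<noteq> 0 \<longrightarrow> z \<bullet> (A *v z) > 0)"

definition diag_sqrt :: "real^'n^'n \<Rightarrow> real^'n^'n" where
  "diag_sqrt D = (\<chi> i j. if i = j then sqrt (D$i$i) else 0)"

definition diag_inv_sqrt :: "real^'n^'n \<Rightarrow> real^'n^'n" where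
  "diag_inv_sqrt D = (\<chi> i j. if i = j then 1 / sqrt (D$i$i) else 0)"

definition l0 :: "real^'n \<Rightarrow> nat" where
  "l0 x = card {i. x$i \<noteq> 0}"

definition sparse_set :: "nat \<Rightarrow> (real^'n) set" where
  "sparse_set s = {x. l0 x \<le> s}"

definition proj_sparse :: "nat \<Rightarrow> real^'n \<Rightarrow> (real^'n) set" where
  "proj_sparse s z = {y \<in> sparse_set s. \<forall>y' \<in> sparse_set s. (norm (y - z))^2 \<le> (norm (y' - z))^2}"

definition iwht_seq :: "nat \<Rightarrow> real^'n^'n \<Rightarrow> (real^'n \<Rightarrow> real^'n) \<Rightarrow> (nat \<Rightarrow> real^'n) \<Rightarrow> bool" where
  "iwht_seq s D g x \<longleftrightarrow> x 0 \<in> sparse_set s \<and>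
     (\<forall>k. \<exists>y \<in> proj_sparse s (diag_sqrt D *v x k - diag_inv_sqrt D *v g (x k)).
            x (Suc k) = diag_inv_sqrt D *v y)"

end

theory Submission
  imports Defs
begin

(* In the coordinates y = D^(1/2) x an IWHT step projects the gradient step
   y_k - D^(-1/2) grad f(x_k) onto C_s. Convexity and the H-descent inequality give a three-point
   inequality comparing this projection with any point u. Taking u = x_k yields sufficient decrease,
   hence f(xbar) <= f(x_k) for all k. Taking u = xbar yields, since the projection keeps the
   coordinates on its support, the Fejer inequality |x_(k+1) - xbar|_D <= |x_k - xbar|_D whenever
   supp xbar lies in supp x_(k+1); it also bounds the step |x_(k+1) - x_k|_D by a multiple of
   |x_k - xbar|_D. The support condition holds as soon as x_(k+1) is close to xbar, so once the
   subsequence brings the iterates close enough to xbar, the D-distance never increases again and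
   tends to 0. *)

lemma convex_on_above_tangent_has_derivative:
  fixes f :: "'a::real_normed_vector \<Rightarrow> real"
  assumes conv: "convex_on UNIV f" and deriv: "(f has_derivative f') (at c)"
  shows "f c + f' (x - c) \<le> f x"
proof -
  define h where "h t = f (c + t *\<^sub>R (x - c))" for t :: real
  have h_convex: "convex_on UNIV h"
  proof (rule convex_onI)
    fix t u v :: real
    assume "0 < t" "t < 1"
    have "c + ((1 - t) *\<^sub>R u + t *\<^sub>R v) *\<^sub>R (x - c)
        = (1 - t) *\<^sub>R (c + u *\<^sub>R (x - c)) + t *\<^sub>R (c + v *\<^sub>R (x - c))"
      by (simp add: algebra_simps)
    then show "h ((1 - t) *\<^sub>R u + t *\<^sub>R v) \<le> (1 - t) * h u + t * h v"
      unfolding h_def using convex_onD[OF conv, of t] \<open>0 < t\<close> \<open>t < 1\<close> by simp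
  qed simp
  have lin: "linear f'" using deriv by (rule has_derivative_linear)
  have "((\<lambda>t. c + t *\<^sub>R (x - c)) has_derivative (\<lambda>t. t *\<^sub>R (x - c))) (at 0)"
    by (auto intro!: derivative_eq_intros)
  moreover have "(f has_derivative f') (at (c + 0 *\<^sub>R (x - c)))"
    using deriv by simp
  ultimately have "(h has_derivative (\<lambda>t. f' (t *\<^sub>R (x - c)))) (at 0)"
    unfolding h_def by (rule has_derivative_compose[unfolded o_def])
  then have "(h has_field_derivative f' (x - c)) (at 0)"
    by (simp add: has_field_derivative_def linear_scale[OF lin] mult.commute[of _ "f' (x - c)"])
  then have "f' (x - c) * (1 - 0) \<le> h 1 - h 0"
    by (intro convex_on_imp_above_tangent[OF h_convex]) auto
  then show ?thesis by (simp add: h_def)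
qed

lemma is_diag_matrix_vector_mult_nth:
  assumes "is_diag A"
  shows "(A *v z) $ i = A$i$i * z$i"
proof -
  have "(A *v z) $ i = (\<Sum>j\<in>UNIV. A$i$j * z$j)"
    by (simp add: matrix_vector_mult_def)
  also have "\<dots> = (\<Sum>j\<in>UNIV. if j = i then A$i$i * z$i else 0)"
    by (rule sum.cong) (use assms in \<open>auto simp: is_diag_def\<close>)
  finally show ?thesis by simp
qed

lemma is_diag_diff: "is_diag A \<Longrightarrow> is_diag B \<Longrightarrow> is_diag (A - B)"
  by (simp add: is_diag_def)

lemma is_diag_diag_sqrt: "is_diag (diag_sqrt D)"
  by (simp add: is_diag_def diag_sqrt_def)

lemma is_diag_diag_inv_sqrt: "is_diag (diag_inv_sqrt D)"
  by (simp add: is_diag_def diag_inv_sqrt_def)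

lemma diag_sqrt_mult_nth: "(diag_sqrt D *v v) $ i = sqrt (D$i$i) * v$i"
  using is_diag_matrix_vector_mult_nth[OF is_diag_diag_sqrt] by (simp add: diag_sqrt_def)

lemma diag_inv_sqrt_mult_nth: "(diag_inv_sqrt D *v v) $ i = v$i / sqrt (D$i$i)"
  using is_diag_matrix_vector_mult_nth[OF is_diag_diag_inv_sqrt] by (simp add: diag_inv_sqrt_def)

lemma qnorm2_diag: "is_diag A \<Longrightarrow> qnorm2 A z = (\<Sum>i\<in>UNIV. A$i$i * (z$i)\<^sup>2)"
  by (simp add: qnorm2_def inner_vec_def is_diag_matrix_vector_mult_nth power2_eq_square
      algebra_simps)

lemma qnorm2_diff: "qnorm2 (A - B) z = qnorm2 A z - qnorm2 B z"
  by (simp add: qnorm2_def matrix_vector_mult_diff_rdistrib inner_diff_right)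

lemma qnorm2_minus_commute: "qnorm2 A (u - v) = qnorm2 A (v - u)"
  by (simp add: qnorm2_def matrix_vector_mult_diff_distrib inner_diff_left inner_diff_right
      algebra_simps)

lemma pos_def_imp_qnorm2_nonneg: "pos_def A \<Longrightarrow> 0 \<le> qnorm2 A z"
  unfolding pos_def_def qnorm2_def by (cases "z = 0") (auto intro: less_imp_le)

lemma pos_def_diag_pos:
  assumes "is_diag A" "pos_def A"
  shows "0 < A$i$i"
proof -
  have "0 < qnorm2 A (axis i 1)"
    using assms(2) by (simp add: pos_def_def qnorm2_def axis_eq_0_iff)
  also have "qnorm2 A (axis i 1) = A$i$i"
    unfolding qnorm2_diag[OF assms(1)] by (subst sum.remove[of _ i]) (auto simp: axis_def)
  finally show ?thesis .
qed

lemma pos_def_qnorm2_dominates: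
  assumes A: "is_diag A" "pos_def A" and B: "is_diag B"
  obtains C where "0 < C" "\<And>z. qnorm2 B z \<le> C * qnorm2 A z"
proof
  define C where "C = 1 + (\<Sum>j\<in>UNIV. \<bar>B$j$j\<bar> / A$j$j)"
  have A_pos: "0 < A$i$i" for i by (rule pos_def_diag_pos[OF A])
  then have ratios_nonneg: "0 \<le> \<bar>B$i$i\<bar> / A$i$i" for i
    by (simp add: less_imp_le)
  then have ratio_le_sum: "\<bar>B$i$i\<bar> / A$i$i \<le> (\<Sum>j\<in>UNIV. \<bar>B$j$j\<bar> / A$j$j)" for i
    by (intro member_le_sum) auto
  have ratio_le: "\<bar>B$i$i\<bar> / A$i$i \<le> C" for i
    using ratio_le_sum[of i] unfolding C_def by linarith
  have "0 \<le> (\<Sum>j\<in>UNIV. \<bar>B$j$j\<bar> / A$j$j)"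
    by (rule sum_nonneg) (rule ratios_nonneg)
  then show "0 < C"
    unfolding C_def by linarith
  fix z
  have "B$i$i \<le> C * A$i$i" for i
    using ratio_le[of i] A_pos[of i] by (simp add: pos_divide_le_eq)
  then have "(\<Sum>i\<in>UNIV. B$i$i * (z$i)\<^sup>2) \<le> (\<Sum>i\<in>UNIV. C * A$i$i * (z$i)\<^sup>2)"
    by (intro sum_mono mult_right_mono) auto
  then show "qnorm2 B z \<le> C * qnorm2 A z"
    by (simp add: qnorm2_diag A B sum_distrib_left mult.assoc)
qed

context
  fixes D :: "real^'n^'n"
  assumes D_pos: "\<And>i. 0 < D$i$i"
begin

lemma diag_inv_sqrt_diag_sqrt [simp]: "diag_inv_sqrt D *v (diag_sqrt D *v v) = v"
  using D_pos by (simp add: vec_eq_iff diag_sqrt_mult_nth diag_inv_sqrt_mult_nth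
      less_imp_neq[symmetric])

lemma diag_sqrt_diag_inv_sqrt [simp]: "diag_sqrt D *v (diag_inv_sqrt D *v v) = v"
  using D_pos by (simp add: vec_eq_iff diag_sqrt_mult_nth diag_inv_sqrt_mult_nth
      less_imp_neq[symmetric])

lemma diag_sqrt_mult_nth_eq_0_iff [simp]: "(diag_sqrt D *v v) $ i = 0 \<longleftrightarrow> v$i = 0"
  using D_pos[of i] by (simp add: diag_sqrt_mult_nth)

lemma l0_diag_sqrt_mult [simp]: "l0 (diag_sqrt D *v v) = l0 v"
  by (simp add: l0_def)

lemma inner_diag_sqrt_diag_inv_sqrt: "(diag_sqrt D *v u) \<bullet> (diag_inv_sqrt D *v v) = u \<bullet> v"
  unfolding inner_vec_def
  using D_pos by (intro sum.cong) (simp_all add: diag_sqrt_mult_nth diag_inv_sqrt_mult_nth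
      less_imp_neq[symmetric])

lemma norm_diag_sqrt_power2:
  assumes "is_diag D"
  shows "(norm (diag_sqrt D *v u))\<^sup>2 = qnorm2 D u"
  unfolding power2_norm_eq_inner inner_vec_def qnorm2_diag[OF assms]
  using D_pos by (intro sum.cong) (simp_all add: diag_sqrt_mult_nth power2_eq_square
      less_imp_le)

lemma norm_diag_sqrt_diff_diag_inv_sqrt_power2:
  assumes "is_diag D"
  shows "(norm (diag_sqrt D *v u - diag_inv_sqrt D *v v))\<^sup>2
    = qnorm2 D u - 2 * (u \<bullet> v) + (norm (diag_inv_sqrt D *v v))\<^sup>2"
  using dot_norm_neg[of "diag_sqrt D *v u" "diag_inv_sqrt D *v v"]
  by (simp add: inner_diag_sqrt_diag_inv_sqrt norm_diag_sqrt_power2[OF assms])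

end

lemma l0_mono:
  assumes "\<And>i. u$i \<noteq> 0 \<Longrightarrow> w$i \<noteq> 0"
  shows "l0 u \<le> l0 w"
  unfolding l0_def using assms by (intro card_mono) auto

lemma nonzero_coordinates_stable:
  fixes u :: "real^'n"
  obtains \<delta> where "0 < \<delta>" "\<And>v i. norm (v - u) < \<delta> \<Longrightarrow> u$i \<noteq> 0 \<Longrightarrow> v$i \<noteq> 0"
proof
  define \<delta> where "\<delta> = Min (insert 1 ((\<lambda>i. \<bar>u$i\<bar>) ` {i. u$i \<noteq> 0}))"
  show "0 < \<delta>"
    unfolding \<delta>_def by (simp add: Min_gr_iff)
  fix v i
  assume near: "norm (v - u) < \<delta>" and "u$i \<noteq> 0"
  then have "\<delta> \<le> \<bar>u$i\<bar>"
    unfolding \<delta>_def by (intro Min_le) auto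
  moreover have "\<bar>(v - u)$i\<bar> \<le> norm (v - u)"
    by (rule component_le_norm_cart)
  ultimately show "v$i \<noteq> 0"
    using near by auto
qed

lemma closed_sparse_set: "closed (sparse_set s :: (real^'n) set)"
  unfolding closed_def open_dist
proof (intro ballI)
  fix u :: "real^'n"
  assume "u \<in> - sparse_set s"
  then have "s < l0 u"
    by (simp add: sparse_set_def)
  obtain \<delta> where "0 < \<delta>" and stable: "\<And>v i. norm (v - u) < \<delta> \<Longrightarrow> u$i \<noteq> 0 \<Longrightarrow> v$i \<noteq> 0"
    using nonzero_coordinates_stable[of u] by blast
  have "v \<in> - sparse_set s" if "dist v u < \<delta>" for v
    using l0_mono[of u v] stable[of v] that \<open>s < l0 u\<close>
    by (simp add: sparse_set_def dist_norm)
  with \<open>0 < \<delta>\<close> show "\<exists>e>0. \<forall>v. dist v u < e \<longrightarrow> v \<in> - sparse_set s"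
    by blast
qed

lemma proj_sparse_sparse_set: "w \<in> proj_sparse s z \<Longrightarrow> w \<in> sparse_set s"
  by (simp add: proj_sparse_def)

lemma proj_sparse_le:
  "w \<in> proj_sparse s z \<Longrightarrow> v \<in> sparse_set s \<Longrightarrow> (norm (w - z))\<^sup>2 \<le> (norm (v - z))\<^sup>2"
  by (simp add: proj_sparse_def)

lemma proj_sparse_nth:
  assumes w: "w \<in> proj_sparse s z" and "w$i \<noteq> 0"
  shows "w$i = z$i"
proof (rule ccontr)
  assume "w$i \<noteq> z$i"
  define w' where "w' = (\<chi> j. if j = i then z$i else w$j)"
  have "l0 w' \<le> l0 w"
    using \<open>w$i \<noteq> 0\<close> by (intro l0_mono) (auto simp: w'_def split: if_splits)
  with proj_sparse_sparse_set[OF w] have "w' \<in> sparse_set s"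
    by (simp add: sparse_set_def)
  with w have "(norm (w - z))\<^sup>2 \<le> (norm (w' - z))\<^sup>2"
    by (rule proj_sparse_le)
  moreover have "(norm (w - z))\<^sup>2 = (norm (w' - z))\<^sup>2 + (w$i - z$i)\<^sup>2"
    unfolding power2_norm_eq_inner inner_vec_def
    by (subst (1 2) sum.remove[of _ i]) (auto simp: w'_def power2_eq_square)
  moreover have "0 < (w$i - z$i)\<^sup>2"
    using \<open>w$i \<noteq> z$i\<close> by simp
  ultimately show False
    by linarith
qed

lemma proj_sparse_pythagoras:
  assumes w: "w \<in> proj_sparse s z" and supp: "\<And>i. u$i \<noteq> 0 \<Longrightarrow> w$i \<noteq> 0"
  shows "(norm (z - u))\<^sup>2 = (norm (z - w))\<^sup>2 + (norm (w - u))\<^sup>2"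
proof -
  have "((z - u)$i)\<^sup>2 = ((z - w)$i)\<^sup>2 + ((w - u)$i)\<^sup>2" for i
    using proj_sparse_nth[OF w, of i] supp[of i] by (cases "w$i = 0"; cases "u$i = 0") auto
  then show ?thesis
    unfolding power2_norm_eq_inner inner_vec_def by (simp add: power2_eq_square sum.distrib)
qed

lemma locally_nonincreasing_tendsto_zero:
  fixes e :: "nat \<Rightarrow> real"
  assumes nonneg: "\<And>k. 0 \<le> e k"
    and growth: "\<And>k. e (Suc k) \<le> L * e k" and "0 < L"
    and nonincreasing: "\<And>k. e (Suc k) < \<delta> \<Longrightarrow> e (Suc k) \<le> e k" and "0 < \<delta>"
    and small: "\<And>\<epsilon>. 0 < \<epsilon> \<Longrightarrow> \<exists>m. e m < \<epsilon>"
  shows "e \<longlonglongrightarrow> 0"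
proof (rule LIMSEQ_I)
  fix \<epsilon> :: real
  assume "0 < \<epsilon>"
  define \<rho> where "\<rho> = min \<epsilon> (\<delta> / L)"
  have "0 < \<rho>"
    using \<open>0 < \<epsilon>\<close> \<open>0 < \<delta>\<close> \<open>0 < L\<close> by (simp add: \<rho>_def)
  then obtain m where "e m < \<rho>"
    using small by blast
  have stays: "e (m + n) \<le> e m" for n
  proof (induction n)
    case (Suc n)
    have "e (Suc (m + n)) \<le> L * e (m + n)"
      by (rule growth)
    also have "\<dots> < L * \<rho>"
      using Suc.IH \<open>e m < \<rho>\<close> \<open>0 < L\<close> by simp
    also have "\<dots> \<le> \<delta>"
      using \<open>0 < L\<close> by (simp add: \<rho>_def min_def pos_le_divide_eq mult.commute)
    finally have "e (Suc (m + n)) \<le> e (m + n)"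
      by (rule nonincreasing)
    with Suc.IH show ?case
      by simp
  qed simp
  have "norm (e n - 0) < \<epsilon>" if "m \<le> n" for n
    using stays[of "n - m"] that nonneg[of n] \<open>e m < \<rho>\<close> by (simp add: \<rho>_def)
  then show "\<exists>N. \<forall>n\<ge>N. norm (e n - 0) < \<epsilon>"
    by blast
qed

locale iwht_problem =
  fixes f :: "real^'n \<Rightarrow> real"
    and grad :: "real^'n \<Rightarrow> real^'n"
    and H D :: "real^'n^'n"
  assumes grad: "\<And>z. (f has_derivative (\<lambda>h. grad z \<bullet> h)) (at z)"
    and conv: "convex_on UNIV f"
    and H_diag: "is_diag H"
    and H_nonneg: "\<And>i. 0 \<le> H$i$i"
    and descent: "\<And>u v. f v \<le> f u + grad u \<bullet> (v - u) + 1/2 * qnorm2 H (v - u)"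
    and D_diag: "is_diag D"
    and D_gt_H: "pos_def (D - H)"
begin

lemma D_pos: "0 < D$i$i"
  using pos_def_diag_pos[OF is_diag_diff[OF D_diag H_diag] D_gt_H, of i] H_nonneg[of i] by simp

lemmas D_scaling_simps [simp] =
  diag_inv_sqrt_diag_sqrt[OF D_pos] diag_sqrt_diag_inv_sqrt[OF D_pos]
  diag_sqrt_mult_nth_eq_0_iff[OF D_pos] l0_diag_sqrt_mult[OF D_pos]

definition scaled_gradient_step :: "real^'n \<Rightarrow> real^'n" where
  "scaled_gradient_step u = diag_sqrt D *v u - diag_inv_sqrt D *v grad u"

lemma scaled_gradient_step_three_point:
  "(norm (scaled_gradient_step a - diag_sqrt D *v u))\<^sup>2
     - (norm (scaled_gradient_step a - diag_sqrt D *v b))\<^sup>2 + qnorm2 (D - H) (b - a)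
   \<le> qnorm2 D (a - u) + 2 * f u - 2 * f b"
proof -
  let ?g = "grad a" and ?Qg = "diag_inv_sqrt D *v grad a"
  have expand: "(norm (scaled_gradient_step a - diag_sqrt D *v v))\<^sup>2
      = qnorm2 D (a - v) - 2 * (?g \<bullet> (a - v)) + (norm ?Qg)\<^sup>2" for v
    using norm_diag_sqrt_diff_diag_inv_sqrt_power2[OF D_pos D_diag, of "a - v" ?g]
    by (simp add: scaled_gradient_step_def matrix_vector_mult_diff_distrib inner_commute
        algebra_simps)
  have tangent: "f a + ?g \<bullet> (u - a) \<le> f u"
    using convex_on_above_tangent_has_derivative[OF conv grad] .
  have "f b \<le> f a + ?g \<bullet> (b - a) + 1/2 * qnorm2 H (b - a)"
    by (rule descent)
  with tangent show ?thesis
    unfolding expand qnorm2_diff qnorm2_minus_commute[of D a b]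
    by (simp add: inner_diff_right algebra_simps)
qed

end

locale iwht_run = iwht_problem f grad H D
  for f :: "real^'n \<Rightarrow> real" and grad H D +
  fixes s :: nat and x :: "nat \<Rightarrow> real^'n"
  assumes iwht: "iwht_seq s D grad x"
begin

lemma scaled_iterate_in_proj:
  "diag_sqrt D *v x (Suc k) \<in> proj_sparse s (scaled_gradient_step (x k))"
proof -
  obtain y where "y \<in> proj_sparse s (scaled_gradient_step (x k))"
    and "x (Suc k) = diag_inv_sqrt D *v y"
    using iwht by (auto simp: iwht_seq_def scaled_gradient_step_def)
  then show ?thesis
    by simp
qed

lemma iterate_sparse: "x k \<in> sparse_set s"
proof (cases k)
  case 0
  then show ?thesis
    using iwht by (simp add: iwht_seq_def)
next
  case (Suc j)
  have "diag_sqrt D *v x k \<in> sparse_set s"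
    using proj_sparse_sparse_set[OF scaled_iterate_in_proj[of j]] by (simp add: Suc)
  then show ?thesis
    by (simp add: sparse_set_def)
qed

lemma scaled_iterate_le:
  assumes "u \<in> sparse_set s"
  shows "(norm (scaled_gradient_step (x k) - diag_sqrt D *v x (Suc k)))\<^sup>2
    \<le> (norm (scaled_gradient_step (x k) - diag_sqrt D *v u))\<^sup>2"
  using proj_sparse_le[OF scaled_iterate_in_proj, of "diag_sqrt D *v u"] assms
  by (simp add: sparse_set_def norm_minus_commute)

lemma sufficient_decrease:
  "f (x (Suc k)) + 1/2 * qnorm2 (D - H) (x (Suc k) - x k) \<le> f (x k)"
proof -
  have "qnorm2 D (x k - x k) = 0"
    by (simp add: qnorm2_def)
  then show ?thesis
    using scaled_gradient_step_three_point[of "x k" "x k" "x (Suc k)"]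
      scaled_iterate_le[OF iterate_sparse, of k k] by linarith
qed

lemma decseq_objective: "decseq (\<lambda>k. f (x k))"
proof (rule decseq_SucI)
  fix k
  show "f (x (Suc k)) \<le> f (x k)"
    using sufficient_decrease[of k] pos_def_imp_qnorm2_nonneg[OF D_gt_H, of "x (Suc k) - x k"]
    by linarith
qed

lemma step_le_dist:
  assumes "u \<in> sparse_set s" "f u \<le> f (x (Suc k))"
  shows "qnorm2 (D - H) (x (Suc k) - x k) \<le> qnorm2 D (x k - u)"
  using scaled_gradient_step_three_point[of "x k" u "x (Suc k)"] scaled_iterate_le[OF assms(1), of k]
    assms(2) by linarith

lemma fejer_monotone:
  assumes supp: "\<And>i. u$i \<noteq> 0 \<Longrightarrow> x (Suc k) $ i \<noteq> 0" and "f u \<le> f (x (Suc k))"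
  shows "qnorm2 D (x (Suc k) - u) \<le> qnorm2 D (x k - u)"
proof -
  have "(norm (scaled_gradient_step (x k) - diag_sqrt D *v u))\<^sup>2
      = (norm (scaled_gradient_step (x k) - diag_sqrt D *v x (Suc k)))\<^sup>2
        + qnorm2 D (x (Suc k) - u)"
    using proj_sparse_pythagoras[OF scaled_iterate_in_proj, of "diag_sqrt D *v u"] supp
    by (simp add: norm_diag_sqrt_power2[OF D_pos D_diag, symmetric] matrix_vector_mult_diff_distrib)
  then show ?thesis
    using scaled_gradient_step_three_point[of "x k" u "x (Suc k)"] assms(2)
      pos_def_imp_qnorm2_nonneg[OF D_gt_H, of "x (Suc k) - x k"] by linarith
qed

end

locale iwht_limit_point = iwht_run f grad H D s x
  for f :: "real^'n \<Rightarrow> real" and grad H D s x +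
  fixes xbar :: "real^'n" and r :: "nat \<Rightarrow> nat"
  assumes subseq: "strict_mono r"
    and subseq_lim: "(x \<circ> r) \<longlonglongrightarrow> xbar"
begin

lemma limit_point_sparse: "xbar \<in> sparse_set s"
  using closed_sequentially[OF closed_sparse_set _ subseq_lim] iterate_sparse by auto

lemma objective_limit_point_le: "f xbar \<le> f (x k)"
proof (rule LIMSEQ_le_const2)
  have "continuous_on UNIV f"
    using grad by (blast intro: has_derivative_continuous continuous_at_imp_continuous_on)
  from continuous_on_tendsto_compose[OF this subseq_lim]
  show "(\<lambda>j. f (x (r j))) \<longlonglongrightarrow> f xbar"
    by (simp add: o_def)
  have "f (x (r j)) \<le> f (x k)" if "k \<le> j" for j
    using decseqD[OF decseq_objective] seq_suble[OF subseq, of j] that by (meson order_trans)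
  then show "\<exists>N. \<forall>j\<ge>N. f (x (r j)) \<le> f (x k)"
    by blast
qed

definition scaled_dist :: "nat \<Rightarrow> real" where
  "scaled_dist k = norm (diag_sqrt D *v (x k - xbar))"

lemma scaled_dist_power2: "(scaled_dist k)\<^sup>2 = qnorm2 D (x k - xbar)"
  by (simp add: scaled_dist_def norm_diag_sqrt_power2[OF D_pos D_diag])

lemma scaled_dist_growth:
  obtains L where "0 < L" "\<And>k. scaled_dist (Suc k) \<le> L * scaled_dist k"
proof -
  obtain C where "0 < C" and C: "\<And>z. qnorm2 D z \<le> C * qnorm2 (D - H) z"
    using pos_def_qnorm2_dominates[OF is_diag_diff[OF D_diag H_diag] D_gt_H D_diag] by blast
  have "scaled_dist (Suc k) \<le> (1 + sqrt C) * scaled_dist k" for k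
  proof -
    let ?step = "diag_sqrt D *v (x (Suc k) - x k)"
    have "(norm ?step)\<^sup>2 \<le> C * qnorm2 (D - H) (x (Suc k) - x k)"
      using C by (simp add: norm_diag_sqrt_power2[OF D_pos D_diag])
    also have "\<dots> \<le> C * (scaled_dist k)\<^sup>2"
      using step_le_dist[OF limit_point_sparse objective_limit_point_le] \<open>0 < C\<close>
      by (simp add: scaled_dist_power2)
    also have "\<dots> = (sqrt C * scaled_dist k)\<^sup>2"
      using \<open>0 < C\<close> by (simp add: power_mult_distrib)
    finally have step_le: "norm ?step \<le> sqrt C * scaled_dist k"
      by (rule power2_le_imp_le) (use \<open>0 < C\<close> in \<open>simp add: scaled_dist_def\<close>)
    have "scaled_dist (Suc k) = norm (?step + diag_sqrt D *v (x k - xbar))"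
      by (simp add: scaled_dist_def matrix_vector_mult_diff_distrib)
    also have "\<dots> \<le> norm ?step + scaled_dist k"
      unfolding scaled_dist_def by (rule norm_triangle_ineq)
    finally show ?thesis
      using step_le by (simp add: algebra_simps)
  qed
  moreover have "0 < 1 + sqrt C"
    using \<open>0 < C\<close> by (simp add: add_pos_nonneg)
  ultimately show ?thesis
    using that by blast
qed

lemma scaled_dist_nonincreasing_near_limit:
  obtains \<delta> where "0 < \<delta>" "\<And>k. scaled_dist (Suc k) < \<delta> \<Longrightarrow> scaled_dist (Suc k) \<le> scaled_dist k"
proof -
  obtain \<delta> where "0 < \<delta>" and stable:
    "\<And>v i. norm (v - diag_sqrt D *v xbar) < \<delta> \<Longrightarrow> (diag_sqrt D *v xbar) $ i \<noteq> 0 \<Longrightarrow> v$i \<noteq> 0"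
    using nonzero_coordinates_stable by blast
  have "scaled_dist (Suc k) \<le> scaled_dist k" if "scaled_dist (Suc k) < \<delta>" for k
  proof -
    have "xbar$i \<noteq> 0 \<Longrightarrow> x (Suc k) $ i \<noteq> 0" for i
      using stable[of "diag_sqrt D *v x (Suc k)" i] that
      by (simp add: scaled_dist_def matrix_vector_mult_diff_distrib)
    then have "(scaled_dist (Suc k))\<^sup>2 \<le> (scaled_dist k)\<^sup>2"
      unfolding scaled_dist_power2 by (rule fejer_monotone[OF _ objective_limit_point_le])
    then show ?thesis
      by (rule power2_le_imp_le) (simp add: scaled_dist_def)
  qed
  with \<open>0 < \<delta>\<close> show ?thesis
    using that by blast
qed

lemma scaled_dist_subseq_tendsto_0: "(\<lambda>j. scaled_dist (r j)) \<longlonglongrightarrow> 0"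
proof -
  have "(\<lambda>j. x (r j) - xbar) \<longlonglongrightarrow> 0"
    using LIM_zero[OF subseq_lim] by (simp add: o_def)
  from bounded_linear.tendsto[OF matrix_vector_mul_bounded_linear[of "diag_sqrt D"] this]
  show ?thesis
    unfolding scaled_dist_def by (simp add: tendsto_norm_zero)
qed

lemma scaled_dist_tendsto_0: "scaled_dist \<longlonglongrightarrow> 0"
proof -
  obtain L where L: "0 < L" "\<And>k. scaled_dist (Suc k) \<le> L * scaled_dist k"
    using scaled_dist_growth by blast
  obtain \<delta> where \<delta>: "0 < \<delta>"
    "\<And>k. scaled_dist (Suc k) < \<delta> \<Longrightarrow> scaled_dist (Suc k) \<le> scaled_dist k"
    using scaled_dist_nonincreasing_near_limit by blast
  have small: "\<exists>m. scaled_dist m < \<epsilon>" if "0 < \<epsilon>" for \<epsilon>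
    using order_tendstoD(2)[OF scaled_dist_subseq_tendsto_0 that]
    by (auto simp: eventually_sequentially)
  show ?thesis
    by (rule locally_nonincreasing_tendsto_zero[OF _ L(2,1) \<delta>(2,1) small])
      (simp add: scaled_dist_def)
qed

theorem iterates_tendsto_limit_point: "x \<longlonglongrightarrow> xbar"
proof -
  have "(\<lambda>k. diag_sqrt D *v (x k - xbar)) \<longlonglongrightarrow> 0"
    using scaled_dist_tendsto_0 unfolding scaled_dist_def by (rule tendsto_norm_zero_cancel)
  from bounded_linear.tendsto[OF matrix_vector_mul_bounded_linear this, of "diag_inv_sqrt D"]
  have "(\<lambda>k. x k - xbar) \<longlonglongrightarrow> 0"
    by simp
  then show ?thesis
    by (rule LIM_zero_cancel)
qed

end

theorem theorem4p8:
  fixes f :: "real^'n \<Rightarrow> real"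
    and grad :: "real^'n \<Rightarrow> real^'n"
    and H D :: "real^'n^'n"
    and s :: nat
    and x :: "nat \<Rightarrow> real^'n"
    and xbar :: "real^'n"
  assumes s_pos: "s > 0"
    and grad: "\<And>z. (f has_derivative (\<lambda>h. grad z \<bullet> h)) (at z)"
    and grad_cont: "continuous_on UNIV grad"
    and conv: "convex_on UNIV f"
    and H_diag: "is_diag H"
    and H_nonneg: "\<And>i. H$i$i \<ge> 0"
    and descent: "\<And>u v. f v \<le> f u + grad u \<bullet> (v - u) + 1/2 * qnorm2 H (v - u)"
    and D_diag: "is_diag D"
    and D_gt_H: "pos_def (D - H)"
    and iwht: "iwht_seq s D grad x"
    and limpt: "\<exists>r. strict_mono r \<and> (x \<circ> r) \<longlonglongrightarrow> xbar"
  shows "x \<longlonglongrightarrow> xbar"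
proof -
  obtain r where "strict_mono r" "(x \<circ> r) \<longlonglongrightarrow> xbar"
    using limpt by blast
  then interpret iwht_limit_point f grad H D s x xbar r
    using grad conv H_diag H_nonneg descent D_diag D_gt_H iwht by unfold_locales
  show ?thesis
    by (rule iterates_tendsto_limit_point)
qed

end
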